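(* For fixed positive integer $t$, the two-variable function $(n,k)\mapsto\hat L_0(n,k,t)$ (on positive reals with $1<n/k<t$) has partial derivatives \[ \frac{\partial}{\partial k}\hat L_0(n,k,t)=-\frac{n}{k^2}\big(\log n-y_t(n/k)\big)+\frac{n}{k^2}-\frac1k\quad\text{and}\quad \frac{\partial}{\partial n}\hat L_0(n,k,t)=\frac{\log n-y_t(n/k)}{k}. \]
   Context: $d_i=2^{\binom i2}i!$. For positive integer $t$ and real $1<\rho<t$, $y_t(\rho)$ is defined by: $x_t(\rho),y_t(\rho)$ are the unique reals $x,y$ with $\sum_{i=1}^t e^{x+iy}d_i^{-1}=1$ and $\sum_{i=1}^t ie^{x+iy}d_i^{-1}=\rho$. $\tilde L_0(\rho,k,t)=\sup\{\rho\log(\rho k)-\log k-\rho+1-\sum_ip_i\log(p_id_i)\}$, the supremum over $(p_i)_{i=1}^t\in[0,1]^t$ with $\sum_ip_i=1$, $\sum_iip_i=\rho$ (with $0\log0=0$), and $\hat L_0(n,k,t)=\tilde L_0(n/k,k,t)$. Logarithms are natural. *)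

theory Defs
  imports "HOL-Analysis.Analysis"
begin

definition dcoef :: "nat \<Rightarrow> real" where
  "dcoef i = 2 ^ (i choose 2) * fact i"

definition xy_t :: "nat \<Rightarrow> real \<Rightarrow> real \<times> real" where
  "xy_t t \<rho> = (THE (x, y).
      (\<Sum>i=1..t. exp (x + real i * y) / dcoef i) = 1 \<and>
      (\<Sum>i=1..t. real i * exp (x + real i * y) / dcoef i) = \<rho>)"

definition x_t :: "nat \<Rightarrow> real \<Rightarrow> real" where
  "x_t t \<rho> = fst (xy_t t \<rho>)"

definition y_t :: "nat \<Rightarrow> real \<Rightarrow> real" where
  "y_t t \<rho> = snd (xy_t t \<rho>)"

text \<open>Note: ln 0 = 0 in Isabelle, so p * ln (p * d) = 0 when p = 0 (the convention 0 log 0 = 0).\<close>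
definition L0_tilde :: "real \<Rightarrow> real \<Rightarrow> nat \<Rightarrow> real" where
  "L0_tilde \<rho> k t = Sup {\<rho> * ln (\<rho> * k) - ln k - \<rho> + 1
        - (\<Sum>i=1..t. p i * ln (p i * dcoef i)) | p :: nat \<Rightarrow> real.
        (\<forall>i\<in>{1..t}. 0 \<le> p i \<and> p i \<le> 1) \<and>
        (\<Sum>i=1..t. p i) = 1 \<and> (\<Sum>i=1..t. real i * p i) = \<rho>}"

definition L0_hat :: "real \<Rightarrow> real \<Rightarrow> nat \<Rightarrow> real" where
  "L0_hat n k t = L0_tilde (n / k) k t"

end

theory Submission imports Defs begin

(* Gibbs' inequality (nonnegativity of relative entropy) shows that the supremum defining
   L0_tilde rho k t is attained at the tilted distribution p_i = exp (x + i y) / d_i with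
   (x, y) = (x_t rho, y_t rho); this pair exists by the intermediate value theorem, because the
   mean of the weights exp (i z) / d_i tends to 1 and to t as z tends to -oo and +oo.
   Hence L0_tilde rho k t = rho ln (rho k) - ln k - rho + 1 + H rho, H rho = - x_t rho - rho y_t rho.
   The same inequality, applied to the tilted distributions of two means rho and rho', squeezes
   H rho' - H rho between -(rho' - rho) y_t rho' and -(rho' - rho) y_t rho. As y_t is continuous
   (it inverts the mean map), H' = - y_t, and both partial derivatives follow by the chain rule. *)

lemma ln_less_minus_one:
  fixes x :: real
  assumes "0 < x" "x \<noteq> 1"
  shows "ln x < x - 1"
proof -
  have "ln x \<noteq> x - 1" using assms ln_eq_minus_one by blast
  with ln_le_minus_one[OF assms(1)] show ?thesis by linarith
qed

lemma diff_le_mult_ln_div: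
  fixes p q :: real
  assumes "0 \<le> p" "0 < q"
  shows "p - q \<le> p * ln (p / q)" and "p \<noteq> q \<Longrightarrow> p - q < p * ln (p / q)"
proof -
  have "p - q \<le> p * ln (p / q) \<and> (p \<noteq> q \<longrightarrow> p - q < p * ln (p / q))"
  proof (cases "p = 0")
    case True
    then show ?thesis using assms by simp
  next
    case False
    then have p: "0 < p" using assms by simp
    have eq: "p * ln (p / q) - (p - q) = p * ((q / p - 1) - ln (q / p))"
      using p assms by (simp add: ln_div field_simps)
    have "0 \<le> p * ((q / p - 1) - ln (q / p))"
      using p assms ln_le_minus_one[of "q / p"] by simp
    moreover have "0 < p * ((q / p - 1) - ln (q / p))" if "p \<noteq> q"
      using p assms that ln_less_minus_one[of "q / p"] by simp
    ultimately show ?thesis using eq by linarith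
  qed
  then show "p - q \<le> p * ln (p / q)" and "p \<noteq> q \<Longrightarrow> p - q < p * ln (p / q)" by auto
qed

lemma relative_entropy_nonneg:
  fixes p q :: "'a \<Rightarrow> real"
  assumes "finite A" "\<forall>i\<in>A. 0 \<le> p i" "\<forall>i\<in>A. 0 < q i" "sum q A \<le> sum p A"
  shows "0 \<le> (\<Sum>i\<in>A. p i * ln (p i / q i))"
proof -
  have "0 \<le> (\<Sum>i\<in>A. p i - q i)" using assms(4) by (simp add: sum_subtractf)
  also have "\<dots> \<le> (\<Sum>i\<in>A. p i * ln (p i / q i))"
    using assms(2,3) by (intro sum_mono diff_le_mult_ln_div) auto
  finally show ?thesis .
qed

lemma relative_entropy_eq_0_imp_eq:
  fixes p q :: "'a \<Rightarrow> real"
  assumes "finite A" "\<forall>i\<in>A. 0 \<le> p i" "\<forall>i\<in>A. 0 < q i" "sum q A \<le> sum p A"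
    and "(\<Sum>i\<in>A. p i * ln (p i / q i)) = 0"
  shows "\<forall>i\<in>A. p i = q i"
proof (rule ccontr)
  assume "\<not> (\<forall>i\<in>A. p i = q i)"
  then obtain j where "j \<in> A" "p j \<noteq> q j" by blast
  have "0 \<le> (\<Sum>i\<in>A. p i - q i)" using assms(4) by (simp add: sum_subtractf)
  also have "\<dots> < (\<Sum>i\<in>A. p i * ln (p i / q i))"
    using assms(1-3) \<open>j \<in> A\<close> \<open>p j \<noteq> q j\<close>
    by (intro sum_strict_mono_ex1) (auto intro: diff_le_mult_ln_div)
  finally show False using assms(5) by simp
qed

lemma tendsto_exp_mult_at_bot: "0 < c \<Longrightarrow> ((\<lambda>z. exp (c * z)) \<longlongrightarrow> 0) at_bot"
  for c :: real
  by (rule filterlim_compose[OF exp_at_bot filterlim_tendsto_pos_mult_at_bot[OF tendsto_const _ filterlim_ident]])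

lemma tendsto_exp_mult_at_top: "c < 0 \<Longrightarrow> ((\<lambda>z. exp (c * z)) \<longlongrightarrow> 0) at_top"
  for c :: real
  by (rule filterlim_compose[OF exp_at_bot filterlim_tendsto_neg_mult_at_bot[OF tendsto_const _ filterlim_ident]])

lemma has_real_derivative_squeeze:
  fixes f g :: "real \<Rightarrow> real"
  assumes "\<forall>\<^sub>F z in at x. (z - x) * g z \<le> f z - f x \<and> f z - f x \<le> (z - x) * g x"
    and "isCont g x"
  shows "(f has_real_derivative g x) (at x)"
  unfolding has_field_derivative_iff
proof (rule LIM_zero_cancel, rule Lim_null_comparison)
  have "\<forall>\<^sub>F z in at x. z \<noteq> x" by (simp add: eventually_at_filter)
  with assms(1) show "\<forall>\<^sub>F z in at x. norm ((f z - f x) / (z - x) - g x) \<le> \<bar>g z - g x\<bar>"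
  proof eventually_elim
    case (elim z)
    define q where "q = (f z - f x) / (z - x)"
    have bounds: "(z - x) * g z \<le> (z - x) * q" "(z - x) * q \<le> (z - x) * g x"
      using elim by (simp_all add: q_def)
    have "g z \<le> q \<and> q \<le> g x \<or> g x \<le> q \<and> q \<le> g z"
    proof (cases "0 < z - x")
      case True
      then show ?thesis using bounds by (simp add: mult_le_cancel_left_pos)
    next
      case False
      then have "z - x < 0" using \<open>z \<noteq> x\<close> by simp
      then show ?thesis using bounds by (simp add: mult_le_cancel_left_neg)
    qed
    then show ?case unfolding q_def[symmetric] real_norm_def by linarith
  qed
  show "((\<lambda>z. \<bar>g z - g x\<bar>) \<longlongrightarrow> 0) (at x)"
    using assms(2) by (intro tendsto_rabs_zero LIM_zero) (simp add: isCont_def)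
qed

lemma dcoef_pos: "0 < dcoef i"
  by (simp add: dcoef_def)

lemma dcoef_nonzero [simp]: "dcoef i \<noteq> 0"
  using dcoef_pos[of i] by simp

definition gibbs :: "real \<Rightarrow> real \<Rightarrow> nat \<Rightarrow> real" where
  "gibbs x y i = exp (x + real i * y) / dcoef i"

definition solves_xy :: "nat \<Rightarrow> real \<Rightarrow> real \<Rightarrow> real \<Rightarrow> bool" where
  "solves_xy t \<rho> x y \<longleftrightarrow>
     (\<Sum>i=1..t. gibbs x y i) = 1 \<and> (\<Sum>i=1..t. real i * gibbs x y i) = \<rho>"

lemma gibbs_pos: "0 < gibbs x y i"
  by (simp add: gibbs_def dcoef_pos)

lemma gibbs_nonzero [simp]: "gibbs x y i \<noteq> 0"
  using gibbs_pos[of x y i] by simp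

lemma mult_ln_div_gibbs:
  assumes "0 \<le> p"
  shows "p * ln (p / gibbs x y i) = p * ln (p * dcoef i) - p * (x + real i * y)"
proof (cases "p = 0")
  case False
  then have "ln (p / gibbs x y i) = ln (p * dcoef i) - (x + real i * y)"
    using assms dcoef_pos[of i] by (simp add: gibbs_def ln_div field_simps)
  then show ?thesis by (simp add: right_diff_distrib)
qed simp

lemma relative_entropy_gibbs:
  assumes "(\<Sum>i=1..t. p i) = 1" "(\<Sum>i=1..t. real i * p i) = \<rho>" "\<forall>i\<in>{1..t}. 0 \<le> p i"
  shows "(\<Sum>i=1..t. p i * ln (p i / gibbs x y i))
       = (\<Sum>i=1..t. p i * ln (p i * dcoef i)) - (x + \<rho> * y)"
proof -
  have "(\<Sum>i=1..t. p i * (x + real i * y)) = x * (\<Sum>i=1..t. p i) + y * (\<Sum>i=1..t. real i * p i)"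
    by (simp add: sum.distrib sum_distrib_left algebra_simps)
  then show ?thesis
    using assms by (simp add: mult_ln_div_gibbs sum_subtractf mult.commute)
qed

lemma entropy_ge_gibbs:
  assumes "(\<Sum>i=1..t. gibbs x y i) = 1"
    and "(\<Sum>i=1..t. p i) = 1" "(\<Sum>i=1..t. real i * p i) = \<rho>" "\<forall>i\<in>{1..t}. 0 \<le> p i"
  shows "x + \<rho> * y \<le> (\<Sum>i=1..t. p i * ln (p i * dcoef i))"
proof -
  have "0 \<le> (\<Sum>i=1..t. p i * ln (p i / gibbs x y i))"
    by (rule relative_entropy_nonneg) (use assms gibbs_pos in auto)
  then show ?thesis using relative_entropy_gibbs[OF assms(2-4)] by simp
qed

lemma solves_xy_distribution:
  assumes "solves_xy t \<rho> x y"
  shows "(\<Sum>i=1..t. gibbs x y i) = 1" "(\<Sum>i=1..t. real i * gibbs x y i) = \<rho>"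
    and "\<forall>i\<in>{1..t}. 0 \<le> gibbs x y i"
  using assms gibbs_pos by (auto simp: solves_xy_def less_imp_le)

lemma entropy_gibbs:
  assumes "solves_xy t \<rho> x y"
  shows "(\<Sum>i=1..t. gibbs x y i * ln (gibbs x y i * dcoef i)) = x + \<rho> * y"
  using relative_entropy_gibbs[OF solves_xy_distribution[OF assms], of x y] by simp

lemma solves_xy_le:
  assumes "solves_xy t \<rho> x y" "solves_xy t \<rho>' x' y'"
  shows "x' + \<rho> * y' \<le> x + \<rho> * y"
  using entropy_ge_gibbs[OF solves_xy_distribution(1)[OF assms(2)] solves_xy_distribution[OF assms(1)]]
    entropy_gibbs[OF assms(1)] by linarith

lemma solves_xy_unique:
  assumes "2 \<le> t" "solves_xy t \<rho> x y" "solves_xy t \<rho> x' y'"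
  shows "x = x' \<and> y = y'"
proof -
  have "(\<Sum>i=1..t. gibbs x y i * ln (gibbs x y i / gibbs x' y' i)) = (x + \<rho> * y) - (x' + \<rho> * y')"
    using relative_entropy_gibbs[OF solves_xy_distribution[OF assms(2)], of x' y']
      entropy_gibbs[OF assms(2)] by linarith
  also have "\<dots> = 0"
    using solves_xy_le[OF assms(2,3)] solves_xy_le[OF assms(3,2)] by simp
  finally have same: "\<forall>i\<in>{1..t}. gibbs x y i = gibbs x' y' i"
    using solves_xy_distribution[OF assms(2)] solves_xy_distribution(1)[OF assms(3)] gibbs_pos
    by (intro relative_entropy_eq_0_imp_eq) auto
  have "x + real i * y = x' + real i * y'" if "i \<in> {1..t}" for i
  proof -
    have "gibbs x y i = gibbs x' y' i" using same that by blast
    then show ?thesis using dcoef_pos[of i] by (simp add: gibbs_def)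
  qed
  from this[of 1] this[of 2] assms(1) show ?thesis by simp
qed

lemma x_t_y_t_eqI:
  assumes "2 \<le> t" "solves_xy t \<rho> x y"
  shows "x_t t \<rho> = x \<and> y_t t \<rho> = y"
proof -
  have "xy_t t \<rho> = (THE (x, y). solves_xy t \<rho> x y)"
    by (simp add: xy_t_def solves_xy_def gibbs_def)
  also have "\<dots> = (x, y)"
    by (rule the_equality) (auto simp: assms(2) split: prod.splits dest: solves_xy_unique[OF assms])
  finally show ?thesis by (simp add: x_t_def y_t_def)
qed

definition gibbs_partition :: "nat \<Rightarrow> real \<Rightarrow> real" where
  "gibbs_partition t z = (\<Sum>i=1..t. exp (real i * z) / dcoef i)"

definition gibbs_mean :: "nat \<Rightarrow> real \<Rightarrow> real" where
  "gibbs_mean t z = (\<Sum>i=1..t. real i * exp (real i * z) / dcoef i) / gibbs_partition t z"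

lemma gibbs_partition_pos: "1 \<le> t \<Longrightarrow> 0 < gibbs_partition t z"
  unfolding gibbs_partition_def using dcoef_pos by (intro sum_pos) auto

lemma gibbs_eq_exp_mult: "gibbs x y i = exp x * (exp (real i * y) / dcoef i)"
  by (simp add: gibbs_def exp_add)

lemma solves_xy_gibbs_mean:
  assumes "1 \<le> t"
  shows "solves_xy t (gibbs_mean t z) (- ln (gibbs_partition t z)) z"
proof -
  define Z where "Z = gibbs_partition t z"
  have "0 < Z" using gibbs_partition_pos[OF assms] by (simp add: Z_def)
  then have g: "gibbs (- ln Z) z i = (exp (real i * z) / dcoef i) / Z" for i
    by (simp add: gibbs_eq_exp_mult exp_minus field_simps)
  have "(\<Sum>i=1..t. gibbs (- ln Z) z i) = Z / Z"
    unfolding g sum_divide_distrib[symmetric] by (simp add: Z_def gibbs_partition_def)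
  moreover have "(\<Sum>i=1..t. real i * gibbs (- ln Z) z i) = gibbs_mean t z"
    unfolding g times_divide_eq_right sum_divide_distrib[symmetric] by (simp add: Z_def gibbs_mean_def)
  ultimately show ?thesis
    unfolding solves_xy_def Z_def[symmetric] using \<open>0 < Z\<close> by simp
qed

lemma gibbs_mean_eq:
  assumes "solves_xy t \<rho> x y"
  shows "gibbs_mean t y = \<rho>"
proof -
  have "exp x * gibbs_partition t y = 1" "exp x * (\<Sum>i=1..t. real i * exp (real i * y) / dcoef i) = \<rho>"
    using assms by (simp_all add: solves_xy_def gibbs_eq_exp_mult gibbs_partition_def sum_distrib_left mult_ac)
  then have "gibbs_partition t y = 1 / exp x" "(\<Sum>i=1..t. real i * exp (real i * y) / dcoef i) = \<rho> / exp x"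
    by (simp_all add: field_simps)
  then show ?thesis by (simp add: gibbs_mean_def)
qed

lemma y_t_gibbs_mean:
  assumes "2 \<le> t"
  shows "y_t t (gibbs_mean t z) = z"
  using x_t_y_t_eqI[OF assms solves_xy_gibbs_mean] assms by simp

lemma isCont_gibbs_mean: "1 \<le> t \<Longrightarrow> isCont (gibbs_mean t) z"
  unfolding gibbs_mean_def[abs_def] gibbs_partition_def
  using gibbs_partition_pos[of t z] by (intro continuous_intros) (simp_all add: gibbs_partition_def)

lemma gibbs_mean_shift:
  "gibbs_mean t z = (\<Sum>i=1..t. real i * exp ((real i - c) * z) / dcoef i)
                  / (\<Sum>i=1..t. exp ((real i - c) * z) / dcoef i)"
proof -
  have e: "exp (real i * z) = exp (c * z) * exp ((real i - c) * z)" for i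
    by (simp add: exp_add[symmetric] algebra_simps)
  have "gibbs_mean t z = (exp (c * z) * (\<Sum>i=1..t. real i * exp ((real i - c) * z) / dcoef i))
                       / (exp (c * z) * (\<Sum>i=1..t. exp ((real i - c) * z) / dcoef i))"
    unfolding gibbs_mean_def gibbs_partition_def sum_distrib_left e by (simp add: mult_ac)
  then show ?thesis by simp
qed

lemma gibbs_mean_tendsto:
  assumes "j \<in> {1..t}"
    and "\<And>i. i \<in> {1..t} \<Longrightarrow> ((\<lambda>z. exp ((real i - real j) * z)) \<longlongrightarrow> (if i = j then 1 else 0)) F"
  shows "(gibbs_mean t \<longlongrightarrow> real j) F"
proof -
  have sum_at_j: "(\<Sum>i=1..t. f i * (if i = j then 1 else 0) / dcoef i) = f j / dcoef j" for f :: "nat \<Rightarrow> real"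
  proof -
    have "(\<Sum>i=1..t. f i * (if i = j then 1 else 0) / dcoef i) = (\<Sum>i=1..t. if i = j then f j / dcoef j else 0)"
      by (rule sum.cong) auto
    then show ?thesis using assms(1) by simp
  qed
  have denominator: "(\<Sum>i=1..t. (if i = j then 1 else 0) / dcoef i) = 1 / dcoef j"
    using sum_at_j[of "\<lambda>_. 1"] by simp
  have "((\<lambda>z. (\<Sum>i=1..t. real i * exp ((real i - real j) * z) / dcoef i)
            / (\<Sum>i=1..t. exp ((real i - real j) * z) / dcoef i))
        \<longlongrightarrow> (\<Sum>i=1..t. real i * (if i = j then 1 else 0) / dcoef i)
            / (\<Sum>i=1..t. (if i = j then 1 else 0) / dcoef i)) F"
    by (intro tendsto_divide tendsto_sum tendsto_mult tendsto_const assms(2)) (use denominator in simp_all)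
  then show ?thesis
    unfolding sum_at_j denominator gibbs_mean_shift[of t _ "real j", abs_def] by simp
qed

lemma gibbs_mean_at_bot: "1 \<le> t \<Longrightarrow> (gibbs_mean t \<longlongrightarrow> 1) at_bot"
  using gibbs_mean_tendsto[of 1 t at_bot] tendsto_exp_mult_at_bot by fastforce

lemma gibbs_mean_at_top: "1 \<le> t \<Longrightarrow> (gibbs_mean t \<longlongrightarrow> real t) at_top"
  using gibbs_mean_tendsto[of t t at_top] tendsto_exp_mult_at_top by fastforce

lemma solves_xy_exists:
  assumes "1 \<le> t" "1 < \<rho>" "\<rho> < real t"
  shows "\<exists>x y. solves_xy t \<rho> x y"
proof -
  obtain a where a: "gibbs_mean t a < \<rho>"
    using order_tendstoD(2)[OF gibbs_mean_at_bot[OF assms(1)] assms(2)] eventually_at_bot_linorder by fastforce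
  obtain b where b: "a \<le> b" "\<rho> < gibbs_mean t b"
    using order_tendstoD(1)[OF gibbs_mean_at_top[OF assms(1)] assms(3)] eventually_at_top_linorder
    by (metis nle_le)
  have "continuous_on {a..b} (gibbs_mean t)"
    using isCont_gibbs_mean[OF assms(1)] by (simp add: continuous_at_imp_continuous_on)
  then obtain z where "gibbs_mean t z = \<rho>"
    using IVT'[of "gibbs_mean t" a \<rho> b] a b by auto
  then show ?thesis using solves_xy_gibbs_mean[OF assms(1), of z] by auto
qed

lemma solves_xy_x_t_y_t:
  assumes "2 \<le> t" "1 < \<rho>" "\<rho> < real t"
  shows "solves_xy t \<rho> (x_t t \<rho>) (y_t t \<rho>)"
  using solves_xy_exists[of t \<rho>] x_t_y_t_eqI[OF assms(1)] assms by fastforce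

lemma isCont_y_t:
  assumes "2 \<le> t" "1 < \<rho>" "\<rho> < real t"
  shows "isCont (y_t t) \<rho>"
proof -
  have "isCont (y_t t) (gibbs_mean t (y_t t \<rho>))"
    by (rule isCont_inverse_function[OF zero_less_one y_t_gibbs_mean isCont_gibbs_mean]) (use assms in auto)
  then show ?thesis
    using gibbs_mean_eq[OF solves_xy_x_t_y_t[OF assms]] by simp
qed

(* The maximum of - (\<Sum>i=1..t. p i * ln (p i * dcoef i)) over distributions p on {1..t}
   with mean \<rho> (see L0_tilde_eq_max_entropy). *)
definition max_entropy :: "nat \<Rightarrow> real \<Rightarrow> real" where
  "max_entropy t \<rho> = - x_t t \<rho> - \<rho> * y_t t \<rho>"

lemma max_entropy_diff_bounds:
  assumes "2 \<le> t" "1 < \<rho>" "\<rho> < real t" "1 < \<rho>'" "\<rho>' < real t"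
  shows "(\<rho>' - \<rho>) * - y_t t \<rho>' \<le> max_entropy t \<rho>' - max_entropy t \<rho>"
    and "max_entropy t \<rho>' - max_entropy t \<rho> \<le> (\<rho>' - \<rho>) * - y_t t \<rho>"
  using solves_xy_le[OF solves_xy_x_t_y_t[OF assms(1-3)] solves_xy_x_t_y_t[OF assms(1,4,5)]]
    solves_xy_le[OF solves_xy_x_t_y_t[OF assms(1,4,5)] solves_xy_x_t_y_t[OF assms(1-3)]]
  by (simp_all add: max_entropy_def algebra_simps)

lemma has_real_derivative_max_entropy:
  assumes "2 \<le> t" "1 < \<rho>" "\<rho> < real t"
  shows "(max_entropy t has_real_derivative - y_t t \<rho>) (at \<rho>)"
proof (rule has_real_derivative_squeeze)
  have "\<forall>\<^sub>F \<rho>' in at \<rho>. \<rho>' \<in> {1<..<real t}"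
    using assms(2,3) by (intro eventually_at_in_open') auto
  then show "\<forall>\<^sub>F \<rho>' in at \<rho>. (\<rho>' - \<rho>) * - y_t t \<rho>' \<le> max_entropy t \<rho>' - max_entropy t \<rho> \<and>
      max_entropy t \<rho>' - max_entropy t \<rho> \<le> (\<rho>' - \<rho>) * - y_t t \<rho>"
    by eventually_elim (use max_entropy_diff_bounds[OF assms] in auto)
  show "isCont (\<lambda>\<rho>'. - y_t t \<rho>') \<rho>"
    using isCont_y_t[OF assms] by (rule isCont_minus)
qed

lemma L0_tilde_eq_max_entropy:
  assumes "2 \<le> t" "1 < \<rho>" "\<rho> < real t"
  shows "L0_tilde \<rho> k t = \<rho> * ln (\<rho> * k) - ln k - \<rho> + 1 + max_entropy t \<rho>"
proof -
  let ?C = "\<rho> * ln (\<rho> * k) - ln k - \<rho> + 1"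
  let ?S = "{?C - (\<Sum>i=1..t. p i * ln (p i * dcoef i)) | p :: nat \<Rightarrow> real.
      (\<forall>i\<in>{1..t}. 0 \<le> p i \<and> p i \<le> 1) \<and> (\<Sum>i=1..t. p i) = 1 \<and> (\<Sum>i=1..t. real i * p i) = \<rho>}"
  define x y where "x = x_t t \<rho>" and "y = y_t t \<rho>"
  have sol: "solves_xy t \<rho> x y"
    using solves_xy_x_t_y_t[OF assms] by (simp add: x_def y_def)
  note sums = solves_xy_distribution[OF sol]
  have "gibbs x y i \<le> 1" if "i \<in> {1..t}" for i
    using member_le_sum[of i "{1..t}" "gibbs x y"] that sums(1,3) by simp
  then have "?C - (x + \<rho> * y) \<in> ?S"
    using sums entropy_gibbs[OF sol]
    by (intro CollectI exI[of _ "gibbs x y"] conjI ballI) auto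
  moreover have "v \<le> ?C - (x + \<rho> * y)" if "v \<in> ?S" for v
  proof -
    from that obtain p where "v = ?C - (\<Sum>i=1..t. p i * ln (p i * dcoef i))"
      and p: "(\<Sum>i=1..t. p i) = 1" "(\<Sum>i=1..t. real i * p i) = \<rho>" "\<forall>i\<in>{1..t}. 0 \<le> p i"
      by auto
    with entropy_ge_gibbs[OF sums(1) p] show ?thesis by linarith
  qed
  ultimately have "Sup ?S = ?C - (x + \<rho> * y)"
    by (rule cSup_eq_maximum)
  then show ?thesis
    by (simp add: L0_tilde_def max_entropy_def x_def y_def)
qed

lemma eventually_L0_hat_eq:
  assumes "2 \<le> t" "(N \<longlongrightarrow> n) F" "(K \<longlongrightarrow> k) F" "0 < k" "1 < n / k" "n / k < real t"
  shows "\<forall>\<^sub>F a in F. L0_hat (N a) (K a) t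
           = N a / K a * ln (N a) - ln (K a) - N a / K a + 1 + max_entropy t (N a / K a)"
proof -
  have "((\<lambda>a. N a / K a) \<longlongrightarrow> n / k) F"
    using assms(2-4) by (intro tendsto_divide) auto
  then have "\<forall>\<^sub>F a in F. N a / K a \<in> {1<..<real t}"
    using assms(5,6) by (intro topological_tendstoD) auto
  moreover have "\<forall>\<^sub>F a in F. 0 < K a"
    using order_tendstoD(1)[OF assms(3,4)] .
  ultimately show ?thesis
  proof eventually_elim
    case (elim a)
    then have "N a / K a * K a = N a" by simp
    with elim show ?case
      using L0_tilde_eq_max_entropy[OF assms(1), of "N a / K a" "K a"] by (simp add: L0_hat_def)
  qed
qed

theorem lemma35:
  fixes t :: nat and n k :: real
  assumes "t > 0" and "n > 0" and "k > 0" and "1 < n / k" and "n / k < real t"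
  shows "((\<lambda>k'. L0_hat n k' t) has_real_derivative
            (- (n / k^2) * (ln n - y_t t (n / k)) + n / k^2 - 1 / k)) (at k) \<and>
         ((\<lambda>n'. L0_hat n' k t) has_real_derivative
            ((ln n - y_t t (n / k)) / k)) (at n)"
proof
  have t: "2 \<le> t" using assms(4,5) by linarith
  note dH = has_real_derivative_max_entropy[OF t assms(4,5)]
  have "((\<lambda>k'. n / k') has_real_derivative - n / k^2) (at k)"
    using assms(3) by (auto intro!: derivative_eq_intros simp: power2_eq_square)
  from DERIV_chain2[OF dH this] have "((\<lambda>k'. n / k' * ln n - ln k' - n / k' + 1 + max_entropy t (n / k'))
      has_real_derivative (- (n / k^2) * (ln n - y_t t (n / k)) + n / k^2 - 1 / k)) (at k)"
    using assms(3) by (auto intro!: derivative_eq_intros simp: power2_eq_square field_simps)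
  then show "((\<lambda>k'. L0_hat n k' t) has_real_derivative
      (- (n / k^2) * (ln n - y_t t (n / k)) + n / k^2 - 1 / k)) (at k)"
    using eventually_L0_hat_eq[OF t tendsto_const filterlim_ident assms(3-5)]
    by (subst DERIV_cong_ev[OF refl]) simp_all
  have "((\<lambda>n'. n' / k) has_real_derivative 1 / k) (at n)"
    using assms(3) by (auto intro!: derivative_eq_intros)
  from DERIV_chain2[OF dH this] have "((\<lambda>n'. n' / k * ln n' - ln k - n' / k + 1 + max_entropy t (n' / k))
      has_real_derivative ((ln n - y_t t (n / k)) / k)) (at n)"
    using assms(2,3) by (auto intro!: derivative_eq_intros simp: field_simps)
  then show "((\<lambda>n'. L0_hat n' k t) has_real_derivative ((ln n - y_t t (n / k)) / k)) (at n)"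
    using eventually_L0_hat_eq[OF t filterlim_ident tendsto_const assms(3-5)]
    by (subst DERIV_cong_ev[OF refl]) simp_all
qed

end
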